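(* Let $\alpha\ge0$ and $k\ge1$, and let $\mathbf{v}$ be a unit vector with exactly $k$ nonzero entries whose sorted absolute values satisfy $v_{(i)}^2=\lambda i^{-\alpha}$ for $i=1,\dots,k$, where $\lambda=\big(\sum_{i=1}^k i^{-\alpha}\big)^{-1}$. Then, with constants depending only on $\alpha$ (not on $k$), $$ \max_{1\le p\le k} p\,s^2(p)\ \asymp\ \begin{cases} k^{2-2\alpha}, & 0\le\alpha<\tfrac12,\\ k, & \alpha\ge\tfrac12.\end{cases} $$
   Context: For a unit vector $\mathbf{v}$ with at most $k$ nonzero entries, $v_{(1)}\ge v_{(2)}\ge\cdots$ are the absolute values of its entries in decreasing order and $s(p)=\big(\sum_{i=1}^p v_{(i)}^2\big)^{-1}$ for $1\le p\le k$. For positive quantities $a_k,b_k$, $a_k\asymp b_k$ means there are constants $0<c\le C$ with $c\,b_k\le a_k\le C\,b_k$ for all (sufficiently large) $k$. *)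

theory Defs
  imports Complex_Main
begin

text \<open>A vector in R^n is represented as v :: nat \<Rightarrow> real with coordinates v 0, ..., v (n-1).\<close>

definition sorted_abs :: "nat \<Rightarrow> (nat \<Rightarrow> real) \<Rightarrow> nat \<Rightarrow> real" where
  "sorted_abs n v i = rev (sort (map (\<lambda>j. \<bar>v j\<bar>) [0..<n])) ! (i - 1)"
  \<comment> \<open>v_(i), 1-indexed: the i-th largest absolute value among the n entries\<close>

definition s_fun :: "nat \<Rightarrow> (nat \<Rightarrow> real) \<Rightarrow> nat \<Rightarrow> real" where
  "s_fun n v p = inverse (\<Sum>i=1..p. (sorted_abs n v i)^2)"

definition lam :: "real \<Rightarrow> nat \<Rightarrow> real" where
  "lam \<alpha> k = inverse (\<Sum>i=1..k. real i powr (-\<alpha>))"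

definition rate :: "real \<Rightarrow> nat \<Rightarrow> real" where
  "rate \<alpha> k = (if \<alpha> < 1/2 then real k powr (2 - 2*\<alpha>) else real k)"

end

theory Submission imports Defs begin

text \<open>Write S(m) for the partial sum of i powr -a over i = 1..m. The power-law profile
gives s(p) = S(k) / S(p), so the quantity to estimate is the maximum of p S(k)^2 / S(p)^2.
Since every term of S(m) is at least m powr -a, S(m) is at least m powr (1 - a); this yields
the lower bound from p = 1 when a < 1/2 and from p = k when a >= 1/2.
For the upper bound, compare i powr -a with (m powr (1/2 - a)) / sqrt i and use that the
sum of 1 / sqrt i up to k is at most 2 sqrt k: for a <= 1/2 this gives S(k) <= 2 k powr (1 - a),
and for a >= 1/2 it bounds the tail of S(k) beyond p by 2 sqrt (k / p) S(p).\<close>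

definition partial_zeta :: "real \<Rightarrow> nat \<Rightarrow> real" where
  "partial_zeta a m = (\<Sum>i=1..m. real i powr (-a))"

lemma partial_zeta_pos: "1 \<le> m \<Longrightarrow> 0 < partial_zeta a m"
  unfolding partial_zeta_def by (intro sum_pos) auto

lemma partial_zeta_ge:
  assumes "0 \<le> a"
  shows "real m powr (1 - a) \<le> partial_zeta a m"
proof (cases "m = 0")
  case False
  have "real m powr (1 - a) = (\<Sum>i=1..m. real m powr (-a))"
    using False by (simp add: powr_diff powr_minus field_simps)
  also have "\<dots> \<le> partial_zeta a m"
    unfolding partial_zeta_def using assms by (intro sum_mono) (auto intro!: powr_mono2')
  finally show ?thesis .
qed (simp add: partial_zeta_def)

lemma sum_inverse_sqrt_le: "(\<Sum>i=1..m. 1 / sqrt (real i)) \<le> 2 * sqrt (real m)"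
proof (induction m)
  case 0
  then show ?case by simp
next
  case (Suc m)
  have "1 = (sqrt (real m + 1) - sqrt m) * (sqrt (real m + 1) + sqrt m)"
    by (simp add: algebra_simps)
  also have "\<dots> \<le> (sqrt (real m + 1) - sqrt m) * (2 * sqrt (real m + 1))"
    by (intro mult_left_mono) auto
  finally have "1 / sqrt (real m + 1) \<le> 2 * (sqrt (real m + 1) - sqrt m)"
    by (simp add: field_simps)
  then show ?case using Suc by (simp add: add.commute)
qed

lemma powr_le_inverse_sqrt_mult:
  fixes x y :: real
  assumes "0 < x" "0 < y" and "(a \<le> 1/2 \<and> x \<le> y) \<or> (1/2 \<le> a \<and> y \<le> x)"
  shows "x powr (-a) \<le> 1 / sqrt x * y powr (1/2 - a)"
proof -
  have "x powr (-a) = x powr (1/2 - a) / sqrt x"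
    using assms by (simp add: powr_half_sqrt[symmetric] flip: powr_diff)
  moreover have "x powr (1/2 - a) \<le> y powr (1/2 - a)"
    using assms by (auto intro: powr_mono2 powr_mono2')
  ultimately show ?thesis using assms by (simp add: divide_right_mono)
qed

lemma partial_zeta_le:
  assumes "a \<le> 1/2"
  shows "partial_zeta a k \<le> 2 * real k powr (1 - a)"
proof (cases "k = 0")
  case False
  have "partial_zeta a k \<le> (\<Sum>i=1..k. 1 / sqrt (real i) * real k powr (1/2 - a))"
    unfolding partial_zeta_def using assms by (intro sum_mono powr_le_inverse_sqrt_mult) auto
  also have "\<dots> = (\<Sum>i=1..k. 1 / sqrt (real i)) * real k powr (1/2 - a)"
    by (simp add: sum_distrib_right)
  also have "\<dots> \<le> 2 * sqrt (real k) * real k powr (1/2 - a)"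
    by (intro mult_right_mono sum_inverse_sqrt_le) auto
  also have "\<dots> = 2 * real k powr (1 - a)"
    using False by (simp add: powr_half_sqrt[symmetric] powr_add[symmetric])
  finally show ?thesis .
qed (simp add: partial_zeta_def)

lemma partial_zeta_tail_le:
  assumes "1/2 \<le> a" "1 \<le> p"
  shows "(\<Sum>i=Suc p..k. real i powr (-a)) \<le> 2 * sqrt (real k) * real p powr (1/2 - a)"
proof -
  have "(\<Sum>i=Suc p..k. real i powr (-a))
      \<le> (\<Sum>i=Suc p..k. 1 / sqrt (real i) * real p powr (1/2 - a))"
    using assms by (intro sum_mono powr_le_inverse_sqrt_mult) auto
  also have "\<dots> = (\<Sum>i=Suc p..k. 1 / sqrt (real i)) * real p powr (1/2 - a)"
    by (simp add: sum_distrib_right)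
  also have "\<dots> \<le> (\<Sum>i=1..k. 1 / sqrt (real i)) * real p powr (1/2 - a)"
    by (intro mult_right_mono sum_mono2) auto
  also have "\<dots> \<le> 2 * sqrt (real k) * real p powr (1/2 - a)"
    by (intro mult_right_mono sum_inverse_sqrt_le) auto
  finally show ?thesis .
qed

lemma ratio_bound_small_exponent:
  assumes "0 \<le> a" "a \<le> 1/2" "1 \<le> p"
  shows "real p * (partial_zeta a k)^2 \<le> 4 * real k powr (2 - 2*a) * (partial_zeta a p)^2"
proof -
  have "real p = real p powr 1" using assms by simp
  also have "\<dots> \<le> real p powr (2 - 2*a)" using assms by (intro powr_mono) auto
  also have "\<dots> = (real p powr (1 - a))^2"
    by (simp add: powr_add[symmetric] power2_eq_square)
  also have "\<dots> \<le> (partial_zeta a p)^2"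
    using assms partial_zeta_ge by (intro power_mono) auto
  finally have p: "real p \<le> (partial_zeta a p)^2" .
  have "(partial_zeta a k)^2 \<le> (2 * real k powr (1 - a))^2"
    using assms partial_zeta_le partial_zeta_ge[of a k]
    by (intro power_mono) (auto intro: order_trans[OF powr_ge_zero])
  also have "\<dots> = 4 * real k powr (2 - 2*a)"
    by (simp add: power2_eq_square powr_add[symmetric])
  finally have "(partial_zeta a k)^2 \<le> 4 * real k powr (2 - 2*a)" .
  with p show ?thesis
    by (metis mult.commute mult_mono zero_le_power2 of_nat_0_le_iff)
qed

lemma ratio_bound_large_exponent:
  assumes "1/2 \<le> a" "1 \<le> p" "p \<le> k"
  shows "real p * (partial_zeta a k)^2 \<le> 9 * real k * (partial_zeta a p)^2"
proof -
  have "{1..k} = {1..p} \<union> {Suc p..k}" using assms by auto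
  then have split: "partial_zeta a k = partial_zeta a p + (\<Sum>i=Suc p..k. real i powr (-a))"
    unfolding partial_zeta_def by (simp add: sum.union_disjoint)
  have Sp: "real p powr (1 - a) \<le> partial_zeta a p" "0 \<le> partial_zeta a p"
    using assms partial_zeta_ge partial_zeta_pos[of p a] by auto
  have "sqrt (real p) * partial_zeta a k
      \<le> sqrt (real p) * partial_zeta a p + sqrt (real p) * (2 * sqrt (real k) * real p powr (1/2 - a))"
    using split partial_zeta_tail_le[OF assms(1,2)] by (simp add: distrib_left mult_left_mono)
  also have "\<dots> = sqrt (real p) * partial_zeta a p + 2 * sqrt (real k) * real p powr (1 - a)"
    using assms by (simp add: powr_half_sqrt[symmetric] powr_add[symmetric] algebra_simps)
  also have "\<dots> \<le> sqrt (real k) * partial_zeta a p + 2 * sqrt (real k) * partial_zeta a p"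
    using assms Sp by (intro add_mono mult_right_mono mult_left_mono) auto
  finally have "sqrt (real p) * partial_zeta a k \<le> 3 * sqrt (real k) * partial_zeta a p"
    by simp
  then have "(sqrt (real p) * partial_zeta a k)^2 \<le> (3 * sqrt (real k) * partial_zeta a p)^2"
    using assms partial_zeta_pos[of k a] by (intro power_mono) auto
  then show ?thesis by (simp add: power_mult_distrib)
qed

lemma ratio_bound:
  assumes "0 \<le> a" "1 \<le> p" "p \<le> k"
  shows "real p * (partial_zeta a k / partial_zeta a p)^2 \<le> 9 * rate a k"
proof -
  have "real p * (partial_zeta a k)^2 \<le> 9 * rate a k * (partial_zeta a p)^2"
  proof (cases "a < 1/2")
    case True
    then have "real p * (partial_zeta a k)^2 \<le> 4 * rate a k * (partial_zeta a p)^2"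
      using assms ratio_bound_small_exponent by (simp add: rate_def)
    also have "\<dots> \<le> 9 * rate a k * (partial_zeta a p)^2"
      by (intro mult_right_mono) (auto simp: rate_def)
    finally show ?thesis .
  qed (use assms ratio_bound_large_exponent in \<open>simp add: rate_def\<close>)
  then show ?thesis
    using partial_zeta_pos[OF assms(2), of a] by (simp add: power_divide field_simps)
qed

lemma rate_le_max_ratio:
  assumes "0 \<le> a" "1 \<le> k"
  shows "rate a k \<le> (MAX p\<in>{1..k}. real p * (partial_zeta a k / partial_zeta a p)^2)"
proof -
  define p where "p = (if a < 1/2 then 1 else k)"
  have "rate a k \<le> real p * (partial_zeta a k / partial_zeta a p)^2"
  proof (cases "a < 1/2")
    case True
    have "rate a k = (real k powr (1 - a))^2"
      using True by (simp add: rate_def power2_eq_square powr_add[symmetric])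
    also have "\<dots> \<le> (partial_zeta a k)^2"
      using assms partial_zeta_ge by (intro power_mono) auto
    finally show ?thesis using True by (simp add: p_def partial_zeta_def)
  qed (use assms partial_zeta_pos[of k a] in \<open>simp add: p_def rate_def\<close>)
  also have "\<dots> \<le> (MAX p\<in>{1..k}. real p * (partial_zeta a k / partial_zeta a p)^2)"
    using assms by (intro Max_ge) (auto simp: p_def)
  finally show ?thesis .
qed

lemma s_fun_power_law:
  assumes "\<forall>i\<in>{1..k}. (sorted_abs n v i)^2 = lam a k * real i powr (-a)" "p \<in> {1..k}"
  shows "s_fun n v p = partial_zeta a k / partial_zeta a p"
proof -
  have "(\<Sum>i=1..p. (sorted_abs n v i)^2) = (\<Sum>i=1..p. lam a k * real i powr (-a))"
    using assms by (intro sum.cong) auto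
  also have "\<dots> = inverse (partial_zeta a k) * partial_zeta a p"
    by (simp add: lam_def partial_zeta_def sum_distrib_left)
  finally show ?thesis by (simp add: s_fun_def field_simps)
qed

theorem proposition2:
  fixes \<alpha> :: real
  assumes "\<alpha> \<ge> 0"
  shows "\<exists>c C. 0 < c \<and> c \<le> C \<and>
    (\<forall>k n (v :: nat \<Rightarrow> real).
       k \<ge> 1 \<longrightarrow>
       (\<Sum>j<n. (v j)^2) = 1 \<longrightarrow>
       card {j. j < n \<and> v j \<noteq> 0} = k \<longrightarrow>
       (\<forall>i\<in>{1..k}. (sorted_abs n v i)^2 = lam \<alpha> k * real i powr (-\<alpha>)) \<longrightarrow>
       c * rate \<alpha> k \<le> (MAX p\<in>{1..k}. real p * (s_fun n v p)^2) \<and>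
       (MAX p\<in>{1..k}. real p * (s_fun n v p)^2) \<le> C * rate \<alpha> k)"
proof (rule exI[of _ 1], rule exI[of _ 9], intro conjI allI impI)
  fix k n and v :: "nat \<Rightarrow> real"
  assume k: "k \<ge> 1"
    and profile: "\<forall>i\<in>{1..k}. (sorted_abs n v i)^2 = lam \<alpha> k * real i powr (-\<alpha>)"
  have max_eq: "(MAX p\<in>{1..k}. real p * (s_fun n v p)^2)
      = (MAX p\<in>{1..k}. real p * (partial_zeta \<alpha> k / partial_zeta \<alpha> p)^2)"
    using s_fun_power_law[OF profile] by (intro arg_cong[where f = Max] image_cong) auto
  show "1 * rate \<alpha> k \<le> (MAX p\<in>{1..k}. real p * (s_fun n v p)^2)"
    unfolding max_eq using rate_le_max_ratio[OF assms k] by simp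
  show "(MAX p\<in>{1..k}. real p * (s_fun n v p)^2) \<le> 9 * rate \<alpha> k"
    unfolding max_eq using k assms ratio_bound by (intro Max.boundedI) auto
qed simp_all

end
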